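(* Let $f:[0,\infty)\to[0,\infty)$ be continuous and satisfy $f(f(x))=x\,f(x)$ for all $x\ge 0$. Then either $f(x)=0$ for all $x\ge0$, or $f(0)=0$, $f(1)=1$ and $f$ is strictly increasing on $[0,\infty)$. *)

theory Defs
  imports Complex_Main
begin

end

theory Submission
  imports Defs
begin

text \<open>
  Evaluating the equation at \<open>0\<close> and at \<open>f 0\<close> gives \<open>f 0 = 0\<close>, and comparing it at \<open>x\<close> and \<open>y\<close>
  shows that \<open>f x = f y \<noteq> 0\<close> forces \<open>x = y\<close>. By the intermediate value theorem a zero
  \<open>z > 0\<close> of \<open>f\<close> would make \<open>f\<close> vanish on all of \<open>[0, z]\<close> (a positive value in between would
  be taken twice), while every \<open>t\<close> in \<open>(0, f x\<^sub>0]\<close> is a value \<open>f s\<close> with \<open>s > 0\<close>, so that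
  \<open>f t = s t > 0\<close>. Hence a solution that is not identically zero is positive on \<open>(0, \<infinity>)\<close>,
  thus injective and, being continuous with \<open>f 0 = 0\<close>, strictly increasing; finally
  \<open>f (f 1) = f 1\<close> gives \<open>f 1 = 1\<close>.
\<close>

lemma continuous_on_takes_value_twice:
  fixes f :: "'a::linear_continuum_topology \<Rightarrow> 'b::linorder_topology"
  assumes "continuous_on {a..b} f" "a \<le> c" "c \<le> b" "f a < y" "f b < y" "y < f c"
  obtains u v where "a \<le> u" "u < v" "v \<le> b" "f u = y" "f v = y"
proof -
  obtain u where u: "a \<le> u" "u \<le> c" "f u = y"
    using IVT'[of f a y c] assms continuous_on_subset[OF assms(1)] by fastforce
  obtain v where v: "c \<le> v" "v \<le> b" "f v = y"
    using IVT2'[of f b y c] assms continuous_on_subset[OF assms(1)] by fastforce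
  have "u \<noteq> c" "v \<noteq> c"
    using u v assms(6) by auto
  with u v show ?thesis
    using that by force
qed

lemma continuous_inj_on_atLeast_imp_strict_mono_on:
  fixes f :: "'a::linear_continuum_topology \<Rightarrow> 'b::linorder_topology"
  assumes cont: "continuous_on {a..} f" and inj: "inj_on f {a..}"
    and above: "\<And>x. a < x \<Longrightarrow> f a < f x"
  shows "strict_mono_on {a..} f"
proof (rule strict_mono_onI)
  fix x y
  assume "x \<in> {a..}" "y \<in> {a..}" "x < y"
  show "f x < f y"
  proof (cases "x = a")
    case True
    with \<open>x < y\<close> show ?thesis using above by simp
  next
    case False
    with \<open>x \<in> {a..}\<close> have "a < x" by simp
    have "continuous_on {a..y} f" "inj_on f {a..y}"
      using continuous_on_subset[OF cont] inj_on_subset[OF inj] by auto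
    from continuous_inj_imp_mono[OF \<open>a < x\<close> \<open>x < y\<close> this]
    show ?thesis using above[OF \<open>a < x\<close>] by auto
  qed
qed

locale self_composition_eq =
  fixes f :: "real \<Rightarrow> real"
  assumes cont: "continuous_on {0..} f"
    and nonneg: "\<And>x. x \<ge> 0 \<Longrightarrow> f x \<ge> 0"
    and feq: "\<And>x. x \<ge> 0 \<Longrightarrow> f (f x) = x * f x"
begin

lemma continuous_on_interval: "0 \<le> a \<Longrightarrow> continuous_on {a..b} f"
  using continuous_on_subset[OF cont] by auto

lemma zero_fixed: "f 0 = 0"
proof -
  have "f (f 0) = 0"
    using feq[of 0] by simp
  then have "f (f (f 0)) = f 0" "f (f (f 0)) = 0"
    using feq[of "f 0"] nonneg[of 0] by simp_all
  then show ?thesis by simp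
qed

lemma eq_if_eq_nonzero:
  assumes "0 \<le> x" "0 \<le> y" "f x = f y" "f x \<noteq> 0"
  shows "x = y"
proof -
  have "x * f x = y * f y"
    using feq[OF assms(1)] feq[OF assms(2)] assms(3) by metis
  with assms(3,4) show ?thesis by simp
qed

lemma vanishes_below_zero:
  assumes "0 \<le> x" "x \<le> z" "f z = 0"
  shows "f x = 0"
proof (rule ccontr)
  assume "f x \<noteq> 0"
  with nonneg[OF assms(1)] have pos: "0 < f x" by simp
  have "f 0 < f x / 2" "f z < f x / 2" "f x / 2 < f x"
    using pos zero_fixed assms(3) by simp_all
  then obtain u v where "0 \<le> u" "u < v" "f u = f x / 2" "f v = f x / 2"
    using continuous_on_takes_value_twice[OF continuous_on_interval[of 0 z] assms(1,2)]
    by blast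
  then have "u = v"
    using eq_if_eq_nonzero[of u v] pos by simp
  with \<open>u < v\<close> show False by simp
qed

lemma positive_below_value:
  assumes "0 \<le> x\<^sub>0" "0 < t" "t \<le> f x\<^sub>0"
  shows "0 < f t"
proof -
  obtain s where s: "0 \<le> s" "s \<le> x\<^sub>0" "f s = t"
    using IVT'[of f 0 t x\<^sub>0] continuous_on_interval[of 0 x\<^sub>0] assms zero_fixed by auto
  with \<open>0 < t\<close> have "s \<noteq> 0"
    using zero_fixed by auto
  with s \<open>0 < t\<close> show ?thesis
    using feq[of s] by simp
qed

lemma positive_if_nontrivial:
  assumes "0 \<le> x\<^sub>0" "f x\<^sub>0 \<noteq> 0" "0 < z"
  shows "0 < f z"
proof (rule ccontr)
  assume "\<not> 0 < f z"
  with nonneg[of z] \<open>0 < z\<close> have "f z = 0" by simp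
  moreover have "0 < f x\<^sub>0"
    using nonneg[OF assms(1)] assms(2) by simp
  ultimately show False
    using vanishes_below_zero[of "min z (f x\<^sub>0)" z]
      positive_below_value[OF assms(1), of "min z (f x\<^sub>0)"] \<open>0 < z\<close> by simp
qed

lemma nontrivial_strict_mono_fixes_one:
  assumes "0 \<le> x\<^sub>0" "f x\<^sub>0 \<noteq> 0"
  shows "f 1 = 1" "strict_mono_on {0..} f"
proof -
  note pos = positive_if_nontrivial[OF assms]
  have "inj_on f {0..}"
  proof (rule inj_onI)
    fix x y :: real
    assume "x \<in> {0..}" "y \<in> {0..}" "f x = f y"
    then show "x = y"
      using eq_if_eq_nonzero[of x y] pos[of x] pos[of y] zero_fixed
      by (cases "x = 0") (auto simp: le_less)
  qed
  then show "strict_mono_on {0..} f"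
    using continuous_inj_on_atLeast_imp_strict_mono_on[OF cont] pos zero_fixed by simp
  have "f (f 1) = f 1"
    using feq[of 1] by simp
  then show "f 1 = 1"
    using eq_if_eq_nonzero[of "f 1" 1] nonneg[of 1] pos[of 1] by simp
qed

end

theorem proposition1:
  fixes f :: "real \<Rightarrow> real"
  assumes cont: "continuous_on {0..} f"
    and nonneg: "\<And>x. x \<ge> 0 \<Longrightarrow> f x \<ge> 0"
    and feq: "\<And>x. x \<ge> 0 \<Longrightarrow> f (f x) = x * f x"
  shows "(\<forall>x\<ge>0. f x = 0) \<or> (f 0 = 0 \<and> f 1 = 1 \<and> strict_mono_on {0..} f)"
proof -
  interpret self_composition_eq f
    using assms by unfold_locales
  show ?thesis
  proof (cases "\<forall>x\<ge>0. f x = 0")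
    case False
    then obtain x\<^sub>0 where "0 \<le> x\<^sub>0" "f x\<^sub>0 \<noteq> 0" by auto
    then show ?thesis
      using zero_fixed nontrivial_strict_mono_fixes_one by blast
  qed simp
qed

end
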